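(* Define $\psi:\mathcal{B}_n\to\mathcal{B}_n$ by $\psi(\pi)=\widetilde{\pi}$, where for $i\in[n]$, $\widetilde{\pi}_i=\pi_{n+1-i}-n-1$ if $\pi_{n+1-i}>0$ and $\widetilde{\pi}_i=\pi_{n+1-i}+n+1$ if $\pi_{n+1-i}<0$. Then $\psi$ is a bijection on $\mathcal{B}_n$, and for every $\pi\in\mathcal{B}_n$, $\mathrm{des}_B(\psi(\pi))=n-\mathrm{des}_B(\pi)$.
   Context: $\mathcal{B}_n$ is the group of signed permutations of $[n]$, i.e. bijections $\pi$ of $\{\pm1,\dots,\pm n\}$ with $\pi(-i)=-\pi(i)$, written $\pi=\pi_1\cdots\pi_n$ with $\pi_i=\pi(i)$, integers ordered naturally. Set $\pi_0=0$; $\mathrm{Des}_B(\pi)=\{i\in\{0,1,\dots,n-1\}:\pi_i>\pi_{i+1}\}$ and $\mathrm{des}_B(\pi)=|\mathrm{Des}_B(\pi)|$. *)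

theory Defs
  imports Main
begin

definition signed_set :: "nat \<Rightarrow> int set" where
  "signed_set n = {i. 1 \<le> \<bar>i\<bar> \<and> \<bar>i\<bar> \<le> int n}"

text \<open>Signed permutations B_n: bijections pi of {+-1,...,+-n} with pi(-i) = -pi(i),
  represented as functions on int that are the identity outside {+-1,...,+-n}
  (in particular pi 0 = 0, matching the convention pi_0 = 0).\<close>
definition signed_perms :: "nat \<Rightarrow> (int \<Rightarrow> int) set" where
  "signed_perms n = {\<pi>. bij_betw \<pi> (signed_set n) (signed_set n)
      \<and> (\<forall>i \<in> signed_set n. \<pi> (- i) = - \<pi> i)
      \<and> (\<forall>i. i \<notin> signed_set n \<longrightarrow> \<pi> i = i)}"

definition desB :: "nat \<Rightarrow> (int \<Rightarrow> int) \<Rightarrow> nat" where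
  "desB n \<pi> = card {i \<in> {0..<n}. (if i = 0 then 0 else \<pi> (int i)) > \<pi> (int (i + 1))}"

definition psi_pos :: "nat \<Rightarrow> (int \<Rightarrow> int) \<Rightarrow> int \<Rightarrow> int" where
  "psi_pos n \<pi> i = (let v = \<pi> (int n + 1 - i) in if v > 0 then v - int n - 1 else v + int n + 1)"

definition psi :: "nat \<Rightarrow> (int \<Rightarrow> int) \<Rightarrow> (int \<Rightarrow> int)" where
  "psi n \<pi> = (\<lambda>i. if 1 \<le> i \<and> i \<le> int n then psi_pos n \<pi> i
                 else if 1 \<le> - i \<and> - i \<le> int n then - psi_pos n \<pi> (- i)
                 else i)"

end

theory Submission
  imports Defs
begin

text \<open>On the symmetric set \<open>{\<plusminus>1,\<dots>,\<plusminus>n}\<close> the map \<open>\<psi>(\<pi>)\<close> is \<open>g \<circ> \<pi> \<circ> r\<close>, where \<open>r\<close> reverses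
  the positions and \<open>g\<close> exchanges the block of positive values with the block of negative values,
  preserving the order inside each block; both are odd involutions, so \<open>\<psi>\<close> is an involution
  of \<open>\<B>\<^sub>n\<close>. For distinct values \<open>a\<close>, \<open>b\<close> one has
  \<open>[a > b] + [g b > g a] = 1 + [a > 0] - [b > 0]\<close>, so summing over consecutive values
  \<open>a = \<pi>\<^sub>j\<close>, \<open>b = \<pi>\<^sub>j\<^sub>+\<^sub>1\<close>, a descent of \<open>\<pi>\<close> at \<open>j\<close> and one of \<open>\<psi>(\<pi>)\<close> at \<open>n - j\<close> add up to a
  telescoping sum; the boundary terms cancel because \<open>\<pi>\<^sub>0 = 0\<close>.\<close>

definition shift_value :: "nat \<Rightarrow> int \<Rightarrow> int" where
  "shift_value n v = (if v > 0 then v - int n - 1 else v + int n + 1)"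

definition reverse_index :: "nat \<Rightarrow> int \<Rightarrow> int" where
  "reverse_index n i = (if i > 0 then int n + 1 - i else - (int n + 1) - i)"

lemma mem_signed_set: "x \<in> signed_set n \<longleftrightarrow> 1 \<le> \<bar>x\<bar> \<and> \<bar>x\<bar> \<le> int n"
  by (simp add: signed_set_def)

lemma shift_value_in_signed_set: "v \<in> signed_set n \<Longrightarrow> shift_value n v \<in> signed_set n"
  by (auto simp: mem_signed_set shift_value_def)

lemma shift_value_shift_value: "v \<in> signed_set n \<Longrightarrow> shift_value n (shift_value n v) = v"
  by (auto simp: mem_signed_set shift_value_def)

lemma shift_value_minus: "v \<in> signed_set n \<Longrightarrow> shift_value n (- v) = - shift_value n v"
  by (auto simp: mem_signed_set shift_value_def)

lemma reverse_index_in_signed_set: "i \<in> signed_set n \<Longrightarrow> reverse_index n i \<in> signed_set n"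
  by (auto simp: mem_signed_set reverse_index_def)

lemma reverse_index_reverse_index: "i \<in> signed_set n \<Longrightarrow> reverse_index n (reverse_index n i) = i"
  by (auto simp: mem_signed_set reverse_index_def)

lemma bij_betw_shift_value: "bij_betw (shift_value n) (signed_set n) (signed_set n)"
  by (rule bij_betw_byWitness[where f' = "shift_value n"])
    (auto simp: shift_value_in_signed_set shift_value_shift_value)

lemma bij_betw_reverse_index: "bij_betw (reverse_index n) (signed_set n) (signed_set n)"
  by (rule bij_betw_byWitness[where f' = "reverse_index n"])
    (auto simp: reverse_index_in_signed_set reverse_index_reverse_index)

lemma signed_perms_bij_betw: "\<sigma> \<in> signed_perms n \<Longrightarrow> bij_betw \<sigma> (signed_set n) (signed_set n)"
  by (simp add: signed_perms_def)

lemma signed_perms_in_signed_set: "\<sigma> \<in> signed_perms n \<Longrightarrow> x \<in> signed_set n \<Longrightarrow> \<sigma> x \<in> signed_set n"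
  using signed_perms_bij_betw bij_betwE by blast

lemma signed_perms_minus: "\<sigma> \<in> signed_perms n \<Longrightarrow> x \<in> signed_set n \<Longrightarrow> \<sigma> (- x) = - \<sigma> x"
  by (simp add: signed_perms_def)

lemma signed_perms_outside: "\<sigma> \<in> signed_perms n \<Longrightarrow> x \<notin> signed_set n \<Longrightarrow> \<sigma> x = x"
  by (simp add: signed_perms_def)

lemma signed_perms_zero: "\<sigma> \<in> signed_perms n \<Longrightarrow> \<sigma> 0 = 0"
  by (simp add: signed_perms_outside mem_signed_set)

lemma signed_perms_inj:
  assumes "\<sigma> \<in> signed_perms n"
  shows "inj \<sigma>"
proof (rule injI)
  fix x y assume eq: "\<sigma> x = \<sigma> y"
  have inj_on: "inj_on \<sigma> (signed_set n)"
    using signed_perms_bij_betw[OF assms] by (simp add: bij_betw_def)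
  consider "x \<in> signed_set n" "y \<in> signed_set n" | "x \<notin> signed_set n" "y \<notin> signed_set n"
    | "x \<in> signed_set n \<longleftrightarrow> y \<notin> signed_set n"
    by blast
  then show "x = y"
  proof cases
    case 1 then show ?thesis using inj_on eq by (simp add: inj_on_def)
  next
    case 2 then show ?thesis using eq assms by (simp add: signed_perms_outside)
  next
    case 3 then show ?thesis
      using eq assms by (metis signed_perms_in_signed_set signed_perms_outside)
  qed
qed

lemma signed_perms_abs_le:
  assumes "\<sigma> \<in> signed_perms n" "j \<le> n"
  shows "\<bar>\<sigma> (int j)\<bar> \<le> int n"
proof (cases "j = 0")
  case True then show ?thesis using assms by (simp add: signed_perms_zero)
next
  case False
  then have "int j \<in> signed_set n" using assms(2) by (simp add: mem_signed_set)
  then show ?thesis using signed_perms_in_signed_set[OF assms(1)] by (simp add: mem_signed_set)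
qed

lemma psi_outside: "x \<notin> signed_set n \<Longrightarrow> psi n \<pi> x = x"
  by (auto simp: psi_def mem_signed_set)

lemma psi_pos_eq: "psi_pos n \<pi> i = shift_value n (\<pi> (int n + 1 - i))"
  by (simp add: psi_pos_def shift_value_def Let_def)

lemma psi_eq_comp:
  assumes \<pi>: "\<pi> \<in> signed_perms n" and x: "x \<in> signed_set n"
  shows "psi n \<pi> x = shift_value n (\<pi> (reverse_index n x))"
proof (cases "x > 0")
  case True
  then show ?thesis using x by (simp add: psi_def psi_pos_eq reverse_index_def mem_signed_set)
next
  case False
  define y where "y = int n + 1 + x"
  have y: "y \<in> signed_set n" using False x by (auto simp: y_def mem_signed_set)
  have "psi n \<pi> x = - shift_value n (\<pi> y)"
    using False x by (auto simp: psi_def psi_pos_eq y_def mem_signed_set)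
  also have "\<dots> = shift_value n (\<pi> (- y))"
    using signed_perms_minus[OF \<pi> y] shift_value_minus[OF signed_perms_in_signed_set[OF \<pi> y]]
    by simp
  also have "- y = reverse_index n x" using False by (simp add: reverse_index_def y_def)
  finally show ?thesis .
qed

lemma psi_in_signed_perms:
  assumes \<pi>: "\<pi> \<in> signed_perms n"
  shows "psi n \<pi> \<in> signed_perms n"
proof -
  have "bij_betw (shift_value n \<circ> \<pi> \<circ> reverse_index n) (signed_set n) (signed_set n)"
    using bij_betw_reverse_index signed_perms_bij_betw[OF \<pi>] bij_betw_shift_value
    by (blast intro: bij_betw_trans)
  then have "bij_betw (psi n \<pi>) (signed_set n) (signed_set n)"
    by (rule bij_betw_cong[THEN iffD1, rotated]) (simp add: psi_eq_comp[OF \<pi>])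
  moreover have "\<forall>i \<in> signed_set n. psi n \<pi> (- i) = - psi n \<pi> i"
    by (auto simp: psi_def mem_signed_set)
  ultimately show ?thesis by (simp add: signed_perms_def psi_outside)
qed

lemma psi_psi:
  assumes \<pi>: "\<pi> \<in> signed_perms n"
  shows "psi n (psi n \<pi>) = \<pi>"
proof
  fix x
  show "psi n (psi n \<pi>) x = \<pi> x"
  proof (cases "x \<in> signed_set n")
    case True
    then show ?thesis
      by (simp add: psi_eq_comp psi_in_signed_perms \<pi> reverse_index_in_signed_set
          reverse_index_reverse_index signed_perms_in_signed_set shift_value_shift_value)
  next
    case False
    then show ?thesis by (simp add: psi_outside signed_perms_outside[OF \<pi> False])
  qed
qed

lemma bij_betw_psi: "bij_betw (psi n) (signed_perms n) (signed_perms n)"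
  by (rule bij_betw_byWitness[where f' = "psi n"]) (auto simp: psi_psi psi_in_signed_perms)

text \<open>Position \<open>n + 1\<close> is included: there \<open>\<psi>(\<pi>)\<close> is the identity and \<open>\<pi>\<^sub>0 = 0\<close> is shifted to \<open>n + 1\<close>.\<close>

lemma psi_at_position:
  assumes "\<pi> \<in> signed_perms n" "1 \<le> i" "i \<le> Suc n"
  shows "psi n \<pi> (int i) = shift_value n (\<pi> (int (Suc n - i)))"
proof (cases "i = Suc n")
  case True
  then show ?thesis
    using assms(1) by (simp add: psi_outside mem_signed_set signed_perms_zero shift_value_def)
next
  case False
  then show ?thesis using assms by (simp add: psi_def psi_pos_eq of_nat_diff ac_simps)
qed

lemma desB_signed_perms:
  assumes "\<sigma> \<in> signed_perms n"
  shows "int (desB n \<sigma>) = (\<Sum>j<n. of_bool (\<sigma> (int (Suc j)) < \<sigma> (int j)))"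
proof -
  have "desB n \<sigma> = card ({..<n} \<inter> {j. \<sigma> (int (Suc j)) < \<sigma> (int j)})"
    unfolding desB_def using assms
    by (intro arg_cong[where f = card]) (auto simp: signed_perms_zero)
  then show ?thesis by simp
qed

text \<open>The exchange of the two blocks of values turns a descent into an ascent, except across
  a sign change, where both orders are descents.\<close>

lemma descent_add_shifted_descent:
  assumes "\<bar>a\<bar> \<le> int n" "b \<in> signed_set n" "a \<noteq> b"
  shows "(of_bool (b < a) :: int) + of_bool (shift_value n a < shift_value n b)
    = 1 + of_bool (0 < a) - of_bool (0 < b)"
  using assms by (auto simp: shift_value_def mem_signed_set)

lemma desB_psi:
  assumes \<pi>: "\<pi> \<in> signed_perms n"
  shows "int (desB n (psi n \<pi>)) = of_bool (0 < \<pi> (int n))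
    + (\<Sum>j<n. of_bool (shift_value n (\<pi> (int j)) < shift_value n (\<pi> (int (Suc j)))))"
proof -
  let ?f = "\<lambda>i. of_bool (psi n \<pi> (int (Suc i)) < psi n \<pi> (int i)) :: int"
  have "int (desB n (psi n \<pi>)) = sum ?f {..<n}"
    by (rule desB_signed_perms[OF psi_in_signed_perms[OF \<pi>]])
  also have "\<dots> = sum ?f {..<Suc n}"
    using signed_perms_abs_le[OF psi_in_signed_perms[OF \<pi>], of n]
    by (simp add: psi_outside mem_signed_set)
  also have "\<dots> = ?f 0 + (\<Sum>i<n. ?f (Suc i))"
    by (rule sum.lessThan_Suc_shift)
  also have "?f 0 = of_bool (0 < \<pi> (int n))"
  proof -
    have "psi n \<pi> 1 = shift_value n (\<pi> (int n))"
      using psi_at_position[OF \<pi>, of 1] by simp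
    then show ?thesis
      using signed_perms_abs_le[OF \<pi>, of n] signed_perms_zero[OF psi_in_signed_perms[OF \<pi>]]
      by (auto simp: shift_value_def)
  qed
  also have "(\<Sum>i<n. ?f (Suc i))
      = (\<Sum>i<n. of_bool (shift_value n (\<pi> (int (n - Suc i))) < shift_value n (\<pi> (int (Suc (n - Suc i))))))"
  proof (rule sum.cong[OF refl])
    fix i assume "i \<in> {..<n}"
    then have "psi n \<pi> (int (Suc i)) = shift_value n (\<pi> (int (Suc (n - Suc i))))"
      and "psi n \<pi> (int (Suc (Suc i))) = shift_value n (\<pi> (int (n - Suc i)))"
      using psi_at_position[OF \<pi>, of "Suc i"] psi_at_position[OF \<pi>, of "Suc (Suc i)"]
      by (simp_all add: Suc_diff_Suc)
    then show "?f (Suc i) = of_bool (shift_value n (\<pi> (int (n - Suc i)))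
        < shift_value n (\<pi> (int (Suc (n - Suc i)))))"
      by simp
  qed
  also have "\<dots> = (\<Sum>j<n. of_bool (shift_value n (\<pi> (int j)) < shift_value n (\<pi> (int (Suc j)))))"
    by (rule sum.nat_diff_reindex)
  finally show ?thesis .
qed

lemma desB_add_desB_psi:
  assumes \<pi>: "\<pi> \<in> signed_perms n"
  shows "int (desB n \<pi>) + int (desB n (psi n \<pi>)) = int n"
proof -
  let ?s = "\<lambda>j. of_bool (0 < \<pi> (int j)) :: int"
  have "(\<Sum>j<n. of_bool (\<pi> (int (Suc j)) < \<pi> (int j))
      + of_bool (shift_value n (\<pi> (int j)) < shift_value n (\<pi> (int (Suc j)))))
      = (\<Sum>j<n. 1 + (?s j - ?s (Suc j)))"
  proof (rule sum.cong[OF refl])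
    fix j assume "j \<in> {..<n}"
    then have "int (Suc j) \<in> signed_set n" by (simp add: mem_signed_set)
    moreover have "\<pi> (int j) \<noteq> \<pi> (int (Suc j))"
      using signed_perms_inj[OF \<pi>] by (simp add: inj_eq)
    ultimately show "of_bool (\<pi> (int (Suc j)) < \<pi> (int j))
        + of_bool (shift_value n (\<pi> (int j)) < shift_value n (\<pi> (int (Suc j))))
        = 1 + (?s j - ?s (Suc j))"
      using \<open>j \<in> {..<n}\<close> by (simp add: descent_add_shifted_descent signed_perms_abs_le
          signed_perms_in_signed_set \<pi>)
  qed
  also have "\<dots> = int n + (?s 0 - ?s n)"
    using sum_lessThan_telescope'[of ?s n] by (simp add: sum.distrib)
  also have "\<dots> = int n - ?s n"
    by (simp add: signed_perms_zero[OF \<pi>])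
  finally show ?thesis
    by (simp add: desB_signed_perms desB_psi \<pi> sum.distrib)
qed

theorem lemma2p1:
  fixes n :: nat
  shows "bij_betw (psi n) (signed_perms n) (signed_perms n)
    \<and> (\<forall>\<pi> \<in> signed_perms n. desB n (psi n \<pi>) = n - desB n \<pi>)"
proof
  show "bij_betw (psi n) (signed_perms n) (signed_perms n)"
    by (rule bij_betw_psi)
  show "\<forall>\<pi> \<in> signed_perms n. desB n (psi n \<pi>) = n - desB n \<pi>"
    using desB_add_desB_psi by (metis add_diff_cancel_left' of_nat_add of_nat_eq_iff)
qed

end
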